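(* Let $F$ be a family, $w$ a function from elements to $\mathbb{N}$ with $w(a)>0$ for some $a\in\bigcup F$, and $K,S$ sets with $K\cup S=\bigcup F$ and $K\cap S=\emptyset$. If $\mathrm{hs}(K',S,F,w,\bigcup F)\ge 0$ for every $K'\subseteq K$, then $F$ is Frankl's.
   Context: All sets and families are finite. $F$ is Frankl's if there is $a \in \bigcup F$ with $2\cdot|\{A\in F: a\in A\}| \ge |F|$. $\mathrm{sw}(w,A)=\sum_{a\in A}w(a)$; $\mathrm{ss}(A,w,X)=2\,\mathrm{sw}(w,A)-\mathrm{sw}(w,X)\in\mathbb{Z}$. The $S$-hypercube with base $K$ is $H(K,S)=\{A : K\subseteq A\subseteq K\cup S\}$. The hyper-share is $\mathrm{hs}(K,S,F,w,X)=\sum_{A\in H(K,S)\cap F}\mathrm{ss}(A,w,X)$. *)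

theory Defs
  imports Main
begin

definition frankls :: "'a set set \<Rightarrow> bool" where
  "frankls F \<longleftrightarrow> (\<exists>a\<in>\<Union>F. 2 * card {A\<in>F. a \<in> A} \<ge> card F)"

definition sw :: "('a \<Rightarrow> nat) \<Rightarrow> 'a set \<Rightarrow> nat" where
  "sw w A = (\<Sum>a\<in>A. w a)"

definition ss :: "'a set \<Rightarrow> ('a \<Rightarrow> nat) \<Rightarrow> 'a set \<Rightarrow> int" where
  "ss A w X = 2 * int (sw w A) - int (sw w X)"

definition hypercube :: "'a set \<Rightarrow> 'a set \<Rightarrow> 'a set set" where
  "hypercube K S = {A. K \<subseteq> A \<and> A \<subseteq> K \<union> S}"

definition hs :: "'a set \<Rightarrow> 'a set \<Rightarrow> 'a set set \<Rightarrow> ('a \<Rightarrow> nat) \<Rightarrow> 'a set \<Rightarrow> int" where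
  "hs K S F w X = (\<Sum>A\<in>hypercube K S \<inter> F. ss A w X)"

end

theory Submission
  imports Defs
begin

(*
  Write U for the union of F.
  Summing the weighted shares ss A w U over all members A of F and exchanging
  the order of summation gives
      \<Sum>A\<in>F. ss A w U  =  \<Sum>a\<in>U. w a * (2 * deg a - |F|),
  where deg a is the number of members containing a.  If F were not Frankl's,
  every factor 2 * deg a - |F| would be negative, so with some positive weight
  the right-hand side is negative.  On the other hand, since K and S partition U,
  every member A lies in exactly one hypercube H(K', S) with K' = A \<inter> K \<subseteq> K;
  hence the left-hand side is the sum of the hyper-shares hs K' S F w U over
  all K' \<subseteq> K, which is nonnegative by hypothesis.
*)

lemma sum_ss_eq_weighted_degrees:
  fixes F :: "'a set set" and w :: "'a \<Rightarrow> nat"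
  assumes finF: "finite F" and finX: "finite X" and sub: "\<forall>A\<in>F. A \<subseteq> X"
  shows "(\<Sum>A\<in>F. ss A w X)
       = (\<Sum>a\<in>X. int (w a) * (2 * int (card {A\<in>F. a \<in> A}) - int (card F)))"
proof -
  define c where "c A a = (if a \<in> A then int (w a) else 0)" for A a
  have sw_as_sum: "int (sw w A) = (\<Sum>a\<in>X. c A a)" if "A \<in> F" for A
  proof -
    have "X \<inter> A = A" using sub that by blast
    then show ?thesis using finX by (simp add: c_def sw_def sum.If_cases)
  qed
  have degree: "(\<Sum>A\<in>F. c A a) = int (card {A\<in>F. a \<in> A}) * int (w a)" for a
    using finF by (simp add: c_def sum.If_cases Int_def conj_commute)
  have "(\<Sum>A\<in>F. ss A w X) = (\<Sum>A\<in>F. \<Sum>a\<in>X. 2 * c A a - int (w a))"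
    by (rule sum.cong)
       (simp_all add: ss_def sw_as_sum sum_subtractf sum_distrib_left, simp add: sw_def)
  also have "\<dots> = (\<Sum>a\<in>X. \<Sum>A\<in>F. 2 * c A a - int (w a))"
    by (rule sum.swap)
  also have "\<dots> = (\<Sum>a\<in>X. int (w a) * (2 * int (card {A\<in>F. a \<in> A}) - int (card F)))"
    by (rule sum.cong) (simp_all add: sum_subtractf sum_distrib_left[symmetric] degree algebra_simps)
  finally show ?thesis .
qed

text \<open>If K and S are disjoint and cover every member of F, the hypercubes
  H(K', S) with K' \<subseteq> K partition F (the member A lies in the one with
  K' = A \<inter> K); so any sum over F splits into sums over these hypercubes.\<close>

lemma sum_over_hypercubes:
  fixes F :: "'a set set"
  assumes finF: "finite F" and finK: "finite K"
    and cover: "\<forall>A\<in>F. A \<subseteq> K \<union> S" and disj: "K \<inter> S = {}"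
  shows "(\<Sum>A\<in>F. f A) = (\<Sum>K'\<in>Pow K. \<Sum>A\<in>hypercube K' S \<inter> F. f A)"
proof -
  have cube: "hypercube K' S \<inter> F = {A\<in>F. A \<inter> K = K'}" if "K' \<in> Pow K" for K'
    using that cover disj unfolding hypercube_def by blast
  have "(\<Sum>A\<in>F. f A) = (\<Sum>K'\<in>Pow K. \<Sum>A\<in>{A\<in>F. A \<inter> K = K'}. f A)"
    by (rule sum.group[symmetric]) (use finF finK in auto)
  also have "\<dots> = (\<Sum>K'\<in>Pow K. \<Sum>A\<in>hypercube K' S \<inter> F. f A)"
    by (rule sum.cong) (simp_all add: cube)
  finally show ?thesis .
qed

lemma weighted_degrees_neg_if_not_frankls:
  fixes F :: "'a set set" and w :: "'a \<Rightarrow> nat"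
  assumes finU: "finite (\<Union>F)" and pos: "\<exists>a\<in>\<Union>F. w a > 0" and nf: "\<not> frankls F"
  shows "(\<Sum>a\<in>\<Union>F. int (w a) * (2 * int (card {A\<in>F. a \<in> A}) - int (card F))) < 0"
proof -
  have excess_neg: "2 * int (card {A\<in>F. a \<in> A}) - int (card F) < 0" if "a \<in> \<Union>F" for a
  proof -
    have "2 * card {A\<in>F. a \<in> A} < card F"
      using nf that unfolding frankls_def by (auto simp: not_le)
    then show ?thesis by linarith
  qed
  obtain a where a: "a \<in> \<Union>F" "w a > 0" using pos by blast
  have "(\<Sum>a\<in>\<Union>F. int (w a) * (2 * int (card {A\<in>F. a \<in> A}) - int (card F))) < (\<Sum>a\<in>\<Union>F. 0)"
  proof (rule sum_strict_mono_ex1[OF finU])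
    show "\<forall>x\<in>\<Union>F. int (w x) * (2 * int (card {A\<in>F. x \<in> A}) - int (card F)) \<le> 0"
      using excess_neg by (simp add: mult_nonneg_nonpos less_imp_le)
    show "\<exists>x\<in>\<Union>F. int (w x) * (2 * int (card {A\<in>F. x \<in> A}) - int (card F)) < 0"
      using a excess_neg[OF a(1)] by (intro bexI[of _ a]) (auto simp: mult_pos_neg)
  qed
  then show ?thesis by simp
qed

theorem lemma3:
  fixes F :: "'a set set" and w :: "'a \<Rightarrow> nat" and K S :: "'a set"
  assumes "finite F" and "\<forall>A\<in>F. finite A"
    and "\<exists>a\<in>\<Union>F. w a > 0"
    and "K \<union> S = \<Union>F" and "K \<inter> S = {}"
    and "\<forall>K'. K' \<subseteq> K \<longrightarrow> hs K' S F w (\<Union>F) \<ge> 0"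
  shows "frankls F"
proof (rule ccontr)
  assume nf: "\<not> frankls F"
  have finU: "finite (\<Union>F)" using assms(1,2) by blast
  have finK: "finite K" using finU assms(4) by (metis finite_Un)
  have "(\<Sum>A\<in>F. ss A w (\<Union>F)) = (\<Sum>K'\<in>Pow K. hs K' S F w (\<Union>F))"
    unfolding hs_def using assms(1,4,5) finK by (intro sum_over_hypercubes) auto
  also have "\<dots> \<ge> 0"
    using assms(6) by (intro sum_nonneg) auto
  finally have "0 \<le> (\<Sum>A\<in>F. ss A w (\<Union>F))" .
  moreover have "(\<Sum>A\<in>F. ss A w (\<Union>F)) < 0"
    using sum_ss_eq_weighted_degrees[OF assms(1) finU, of w]
      weighted_degrees_neg_if_not_frankls[OF finU assms(3) nf] by (simp add: Union_upper)
  ultimately show False by simp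
qed

end
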